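(* Let $(R,\mathfrak{m})$ be a one-dimensional local Noetherian ring and let $n$ be a positive integer. If every $\mathfrak{m}$-primary ideal of $R$ has an $n$-generated reduction, then every ideal of $R$ has an $n$-generated reduction.
   Context: A reduction of an ideal $I$ is an ideal $J\subseteq I$ such that $I^{m+1}=JI^m$ for some $m>0$; it is $n$-generated if it can be generated by $n$ elements. *)

theory Defs
  imports "HOL-Algebra.Ideal_Product" "HOL-Algebra.Ring_Divisibility"
begin

definition local_ring :: "('a, 'b) ring_scheme \<Rightarrow> 'a set \<Rightarrow> bool" where
  "local_ring R m \<longleftrightarrow> cring R \<and> maximalideal m R \<and> (\<forall>I. maximalideal I R \<longrightarrow> I = m)"

definition prime_chain :: "('a, 'b) ring_scheme \<Rightarrow> nat \<Rightarrow> bool" where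
  "prime_chain R n \<longleftrightarrow> (\<exists>P :: nat \<Rightarrow> 'a set.
      (\<forall>i \<le> n. primeideal (P i) R) \<and> (\<forall>i < n. P i \<subset> P (Suc i)))"

definition krull_dim_one :: "('a, 'b) ring_scheme \<Rightarrow> bool" where
  "krull_dim_one R \<longleftrightarrow> prime_chain R 1 \<and> \<not> prime_chain R 2"

definition ideal_radical :: "('a, 'b) ring_scheme \<Rightarrow> 'a set \<Rightarrow> 'a set" where
  "ideal_radical R I = {a \<in> carrier R. \<exists>k::nat. a [^]\<^bsub>R\<^esub> k \<in> I}"

definition primary_ideal :: "'a set \<Rightarrow> ('a, 'b) ring_scheme \<Rightarrow> bool" where
  "primary_ideal Q R \<longleftrightarrow> ideal Q R \<and> Q \<noteq> carrier R \<and>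
     (\<forall>a \<in> carrier R. \<forall>b \<in> carrier R. a \<otimes>\<^bsub>R\<^esub> b \<in> Q \<longrightarrow> a \<in> Q \<or> (\<exists>k::nat. b [^]\<^bsub>R\<^esub> k \<in> Q))"

definition primary_to :: "('a, 'b) ring_scheme \<Rightarrow> 'a set \<Rightarrow> 'a set \<Rightarrow> bool" where
  "primary_to R m Q \<longleftrightarrow> primary_ideal Q R \<and> ideal_radical R Q = m"

primrec ideal_pow :: "('a, 'b) ring_scheme \<Rightarrow> 'a set \<Rightarrow> nat \<Rightarrow> 'a set" where
  "ideal_pow R I 0 = carrier R"
| "ideal_pow R I (Suc k) = ideal_prod R I (ideal_pow R I k)"

definition is_reduction :: "('a, 'b) ring_scheme \<Rightarrow> 'a set \<Rightarrow> 'a set \<Rightarrow> bool" where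
  "is_reduction R J I \<longleftrightarrow> ideal J R \<and> J \<subseteq> I \<and>
     (\<exists>m > 0. ideal_pow R I (Suc m) = ideal_prod R J (ideal_pow R I m))"

definition n_generated :: "('a, 'b) ring_scheme \<Rightarrow> nat \<Rightarrow> 'a set \<Rightarrow> bool" where
  "n_generated R n J \<longleftrightarrow> (\<exists>A \<subseteq> carrier R. finite A \<and> card A \<le> n \<and> J = genideal R A)"

end

(*
  Write (0 : I^t) for the annihilator of I^t. These ideals increase with t, so by Noetherianity they
  stabilize at K = (0 : I^u). The ideal Q = I + K is either the whole ring or m-primary: a prime P
  containing Q and different from m would be a minimal prime, as R has dimension one, and over a
  minimal prime some s outside P kills a power I^t of the finitely generated ideal I; then s lies
  in K, which is contained in P.
  Lifting the generators of an n-generated reduction J of Q modulo K to elements of I yields J'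
  inside I with J contained in J' + K. From Q^(r+1) = J Q^r one gets I^(r+1) in J' I^r + K, and
  multiplying by I^u, which annihilates K, gives I^(u+r+1) = J' I^(u+r).
*)

theory Submission
  imports Defs
begin

no_notation Sum_Type.Plus (infixr \<open><+>\<close> 65)

context ring
begin

lemma ideal_prod_mono:
  assumes "I \<subseteq> I'" "J \<subseteq> J'"
  shows "I \<cdot> J \<subseteq> I' \<cdot> J'"
proof
  fix s assume "s \<in> I \<cdot> J"
  then show "s \<in> I' \<cdot> J'"
  proof (induct s rule: ideal_prod.induct)
    case (prod i j)
    then show ?case using assms by (blast intro: ideal_prod.prod)
  next
    case (sum s1 s2)
    then show ?case by (blast intro: ideal_prod.sum)
  qed
qed

lemma ideal_prod_subset_left: "ideal I R \<Longrightarrow> ideal J R \<Longrightarrow> I \<cdot> J \<subseteq> I"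
  using ideal_prod_inter by blast

lemma ideal_prod_subset_right: "ideal I R \<Longrightarrow> ideal J R \<Longrightarrow> I \<cdot> J \<subseteq> J"
  using ideal_prod_inter by blast

lemma set_add_subset_ideal:
  assumes "ideal X R" "A \<subseteq> X" "B \<subseteq> X"
  shows "A <+> B \<subseteq> X"
proof
  fix z assume "z \<in> A <+> B"
  then obtain a b where "a \<in> A" "b \<in> B" "z = a \<oplus> b"
    unfolding set_add_def' by blast
  then show "z \<in> X"
    using assms additive_subgroup.a_closed[OF ideal.axioms(1)[OF assms(1)]] by blast
qed

lemma set_add_mono: "A \<subseteq> A' \<Longrightarrow> B \<subseteq> B' \<Longrightarrow> A <+> B \<subseteq> A' <+> B'"
  unfolding set_add_def' by blast

lemma ideal_subset_set_add:
  assumes "ideal I R" "ideal J R"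
  shows "I \<subseteq> I <+> J" and "J \<subseteq> I <+> J"
proof -
  have "I \<union> J \<subseteq> carrier R"
    using ideal.Icarr[OF assms(1)] ideal.Icarr[OF assms(2)] by blast
  then have "I \<union> J \<subseteq> Idl (I \<union> J)"
    by (rule genideal_self)
  then have "I \<union> J \<subseteq> I <+> J"
    unfolding union_genideal[OF assms] .
  then show "I \<subseteq> I <+> J" and "J \<subseteq> I <+> J"
    by simp_all
qed

lemma ideal_pow_ideal: "ideal I R \<Longrightarrow> ideal (ideal_pow R I k) R"
  by (induct k) (simp_all add: oneideal ideal_prod_is_ideal)

lemma ideal_pow_carrier: "ideal I R \<Longrightarrow> ideal_pow R I k \<subseteq> carrier R"
  using ideal.Icarr[OF ideal_pow_ideal] by blast

lemma ideal_pow_mono: "I \<subseteq> I' \<Longrightarrow> ideal_pow R I k \<subseteq> ideal_pow R I' k"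
  by (induct k) (simp_all add: ideal_prod_mono)

lemma ideal_pow_antimono:
  assumes "ideal I R" "k \<le> l"
  shows "ideal_pow R I l \<subseteq> ideal_pow R I k"
  using assms(2)
proof (induct l rule: dec_induct)
  case (step l)
  then show ?case
    using ideal_prod_subset_right[OF assms(1) ideal_pow_ideal[OF assms(1)], of l] by simp
qed simp

end

context cring
begin

lemma carrier_ideal_prod: "ideal I R \<Longrightarrow> carrier R \<cdot> I = I"
  using ideal_prod_commute[OF oneideal] ideal_prod_one by simp

lemma ideal_prod_set_add_subset:
  assumes X: "ideal X R" and A: "ideal A R" and B: "ideal B R"
  shows "X \<cdot> (A <+> B) \<subseteq> X \<cdot> A <+> B" and "X \<cdot> (A <+> B) \<subseteq> A <+> X \<cdot> B"
  using ideal_prod_distr(1)[OF X A B] ideal_prod_subset_right[OF X A] ideal_prod_subset_right[OF X B]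
  by (simp_all add: set_add_mono)

lemma ideal_pow_add:
  assumes "ideal I R"
  shows "ideal_pow R I (a + b) = ideal_pow R I a \<cdot> ideal_pow R I b"
proof (induct a)
  case 0
  show ?case using carrier_ideal_prod[OF ideal_pow_ideal[OF assms]] by simp
next
  case (Suc a)
  have "ideal_pow R I (Suc a + b) = I \<cdot> (ideal_pow R I a \<cdot> ideal_pow R I b)"
    using Suc by simp
  also have "\<dots> = ideal_pow R I (Suc a) \<cdot> ideal_pow R I b"
    using ideal_prod_assoc[OF assms ideal_pow_ideal[OF assms] ideal_pow_ideal[OF assms]] by simp
  finally show ?case .
qed

lemma ideal_pow_set_add_subset:
  assumes J: "ideal J R" and L: "ideal L R"
  shows "ideal_pow R (J <+> L) (u + v) \<subseteq> ideal_pow R J u <+> ideal_pow R L v"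
proof (induct "u + v" arbitrary: u v)
  case 0
  then show ?case
    using ideal_subset_set_add(1)[OF oneideal oneideal] by simp
next
  case (Suc n)
  let ?T = "ideal_pow R J u <+> ideal_pow R L v"
  have T: "ideal ?T R"
    by (rule add_ideals[OF ideal_pow_ideal[OF J] ideal_pow_ideal[OF L]])
  have JL: "ideal (J <+> L) R"
    by (rule add_ideals[OF J L])
  show ?case
  proof (cases "u = 0 \<or> v = 0")
    case True
    then have "carrier R \<subseteq> ?T"
      using ideal_subset_set_add[OF ideal_pow_ideal[OF J, of u] ideal_pow_ideal[OF L, of v]]
      by auto
    then show ?thesis
      using ideal_pow_carrier[OF JL] by blast
  next
    case False
    then obtain u' v' where u': "u = Suc u'" and v': "v = Suc v'"
      by (metis not0_implies_Suc)
    let ?Y = "ideal_pow R (J <+> L) n"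
    have "n = u' + v" "n = u + v'"
      using Suc(2) u' v' by simp_all
    then have IH: "?Y \<subseteq> ideal_pow R J u' <+> ideal_pow R L v"
        "?Y \<subseteq> ideal_pow R J u <+> ideal_pow R L v'"
      using Suc(1)[of u' v] Suc(1)[of u v'] by simp_all
    have "J \<cdot> ?Y \<subseteq> J \<cdot> (ideal_pow R J u' <+> ideal_pow R L v)"
      using IH(1) by (rule ideal_prod_mono[OF subset_refl])
    also have "\<dots> \<subseteq> ?T"
      using ideal_prod_set_add_subset(1)[OF J ideal_pow_ideal[OF J] ideal_pow_ideal[OF L]] u' by simp
    finally have JY: "J \<cdot> ?Y \<subseteq> ?T" .
    have "L \<cdot> ?Y \<subseteq> L \<cdot> (ideal_pow R J u <+> ideal_pow R L v')"
      using IH(2) by (rule ideal_prod_mono[OF subset_refl])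
    also have "\<dots> \<subseteq> ?T"
      using ideal_prod_set_add_subset(2)[OF L ideal_pow_ideal[OF J] ideal_pow_ideal[OF L]] v' by simp
    finally have LY: "L \<cdot> ?Y \<subseteq> ?T" .
    have "ideal_pow R (J <+> L) (u + v) = J \<cdot> ?Y <+> L \<cdot> ?Y"
      unfolding Suc(2)[symmetric] using ideal_prod_distr(2)[OF ideal_pow_ideal[OF JL] J L] by simp
    then show ?thesis
      using set_add_subset_ideal[OF T JY LY] by simp
  qed
qed

lemma ideal_pow_set_add_ideal_subset:
  assumes I: "ideal I R" and K: "ideal K R"
  shows "ideal_pow R (I <+> K) s \<subseteq> ideal_pow R I s <+> K"
proof (induct s)
  case 0
  then show ?case
    using ideal_subset_set_add(1)[OF oneideal K] by simp
next
  case (Suc s)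
  let ?Y = "ideal_pow R (I <+> K) s" and ?T = "ideal_pow R I (Suc s) <+> K"
  have T: "ideal ?T R"
    by (rule add_ideals[OF ideal_pow_ideal[OF I] K])
  have Y: "ideal ?Y R"
    by (rule ideal_pow_ideal[OF add_ideals[OF I K]])
  have "I \<cdot> ?Y \<subseteq> I \<cdot> (ideal_pow R I s <+> K)"
    using Suc by (rule ideal_prod_mono[OF subset_refl])
  also have "\<dots> \<subseteq> ?T"
    using ideal_prod_set_add_subset(1)[OF I ideal_pow_ideal[OF I] K] by simp
  finally have IY: "I \<cdot> ?Y \<subseteq> ?T" .
  have "K \<cdot> ?Y \<subseteq> ?T"
    using ideal_prod_subset_left[OF K Y] ideal_subset_set_add(2)[OF ideal_pow_ideal[OF I] K]
    by (rule subset_trans)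
  then show ?case
    using set_add_subset_ideal[OF T IY] ideal_prod_distr(2)[OF Y I K] by simp
qed

lemma cgenideal_pow_subset:
  assumes a: "a \<in> carrier R"
  shows "ideal_pow R (PIdl a) v \<subseteq> PIdl (a [^] v)"
proof (induct v)
  case 0
  show ?case
    using ideal.one_imp_carrier[OF cgenideal_ideal cgenideal_self] by simp
next
  case (Suc v)
  have "(PIdl a) \<cdot> (PIdl (a [^] v)) = Idl (PIdl (a \<otimes> a [^] v))"
    using ideal_prod_eq_genideal[OF cgenideal_ideal cgenideal_ideal] cgenideal_prod a by simp
  also have "\<dots> \<subseteq> PIdl (a \<otimes> a [^] v)"
    using a by (intro genideal_minimal cgenideal_ideal) simp_all
  also have "a \<otimes> a [^] v = a [^] Suc v"
    by (rule nat_pow_Suc2[OF a, symmetric])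
  finally show ?case
    using ideal_prod_mono[OF subset_refl Suc, of "PIdl a"] by simp
qed

lemma genideal_insert_pow_subset:
  assumes a: "a \<in> carrier R" and A: "A \<subseteq> carrier R"
  shows "ideal_pow R (Idl (insert a A)) (t + k) \<subseteq> ideal_pow R (Idl A) t <+> PIdl (a [^] k)"
proof -
  have B: "ideal (Idl A) R" and L: "ideal (PIdl a) R"
    using genideal_ideal[OF A] cgenideal_ideal[OF a] .
  have "Idl (insert a A) \<subseteq> Idl A <+> PIdl a"
    using ideal_subset_set_add[OF B L] genideal_self[OF A] cgenideal_self[OF a]
    by (intro genideal_minimal add_ideals[OF B L]) auto
  then have "ideal_pow R (Idl (insert a A)) (t + k) \<subseteq> ideal_pow R (Idl A <+> PIdl a) (t + k)"
    by (rule ideal_pow_mono)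
  also have "\<dots> \<subseteq> ideal_pow R (Idl A) t <+> ideal_pow R (PIdl a) k"
    by (rule ideal_pow_set_add_subset[OF B L])
  also have "\<dots> \<subseteq> ideal_pow R (Idl A) t <+> PIdl (a [^] k)"
    by (rule set_add_mono[OF subset_refl cgenideal_pow_subset[OF a]])
  finally show ?thesis .
qed

end

context ring
begin

definition annihilator :: "'a set \<Rightarrow> 'a set"
  where "annihilator J = {r \<in> carrier R. \<forall>z \<in> J. r \<otimes> z = \<zero>}"

lemma annihilator_antimono: "J \<subseteq> J' \<Longrightarrow> annihilator J' \<subseteq> annihilator J"
  unfolding annihilator_def by blast

end

context cring
begin

lemma annihilator_ideal:
  assumes J: "J \<subseteq> carrier R"
  shows "ideal (annihilator J) R"
proof (rule idealI[OF ring_axioms])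
  have "\<zero> \<in> annihilator J"
    using J unfolding annihilator_def by auto
  then show "subgroup (annihilator J) (add_monoid R)"
    by (intro add.subgroupI) (use J in \<open>auto simp: annihilator_def l_minus l_distr subset_eq\<close>)
  show "x \<otimes> a \<in> annihilator J" "a \<otimes> x \<in> annihilator J"
    if a: "a \<in> annihilator J" and x: "x \<in> carrier R" for a x
  proof -
    have "(x \<otimes> a) \<otimes> z = \<zero>" if "z \<in> J" for z
      using a x J that unfolding annihilator_def by (auto simp: m_assoc)
    then show "x \<otimes> a \<in> annihilator J" "a \<otimes> x \<in> annihilator J"
      using a x unfolding annihilator_def by (auto simp: m_comm)
  qed
qed

lemma ideal_prod_annihilator:
  assumes "X \<subseteq> carrier R" "K \<subseteq> annihilator X"
  shows "X \<cdot> K \<subseteq> {\<zero>}"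
proof
  fix s assume "s \<in> X \<cdot> K"
  then show "s \<in> {\<zero>}"
  proof (induct s rule: ideal_prod.induct)
    case (prod x k)
    then have "x \<in> carrier R" "k \<in> carrier R" "k \<otimes> x = \<zero>"
      using assms unfolding annihilator_def by auto
    then show ?case
      by (simp add: m_comm)
  qed simp
qed

lemma annihilator_set_add:
  assumes "X \<subseteq> carrier R" "Y \<subseteq> carrier R"
  shows "annihilator X \<inter> annihilator Y \<subseteq> annihilator (X <+> Y)"
  using assms unfolding annihilator_def set_add_def' by (auto simp: r_distr subset_eq)

lemma mult_mem_annihilator_set_add:
  assumes X: "X \<subseteq> carrier R" and Y: "Y \<subseteq> carrier R"
    and s: "s \<in> annihilator X" and s': "s' \<in> annihilator Y"
  shows "s \<otimes> s' \<in> annihilator (X <+> Y)"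
proof -
  have "s \<in> carrier R" "s' \<in> carrier R"
    using s s' unfolding annihilator_def by auto
  then have "s \<otimes> s' \<in> annihilator X \<inter> annihilator Y"
    using ideal.I_r_closed[OF annihilator_ideal[OF X] s] ideal.I_l_closed[OF annihilator_ideal[OF Y] s']
    by blast
  then show ?thesis
    using annihilator_set_add[OF X Y] by blast
qed

lemma annihilator_cgenideal:
  assumes "a \<in> carrier R" "s \<in> carrier R" "s \<otimes> a = \<zero>"
  shows "s \<in> annihilator (PIdl a)"
  using assms unfolding annihilator_def cgenideal_def by (auto simp: m_lcomm)

end

lemma (in cring) primeideal_if_sums_meet_multiplicative:
  assumes P: "ideal P R"
    and S: "\<one> \<in> S" "\<And>a b. a \<in> S \<Longrightarrow> b \<in> S \<Longrightarrow> a \<otimes> b \<in> S" "P \<inter> S = {}"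
    and meets: "\<And>a. a \<in> carrier R \<Longrightarrow> a \<notin> P \<Longrightarrow> \<exists>p\<in>P. \<exists>r\<in>carrier R. p \<oplus> r \<otimes> a \<in> S"
  shows "primeideal P R"
proof (rule primeidealI[OF P is_cring])
  show "carrier R \<noteq> P"
    using S(1,3) by blast
  fix a b assume ab: "a \<in> carrier R" "b \<in> carrier R" "a \<otimes> b \<in> P"
  show "a \<in> P \<or> b \<in> P"
  proof (rule ccontr)
    assume "\<not> (a \<in> P \<or> b \<in> P)"
    then obtain p q r t where pr: "p \<in> P" "r \<in> carrier R" "p \<oplus> r \<otimes> a \<in> S"
        and qt: "q \<in> P" "t \<in> carrier R" "q \<oplus> t \<otimes> b \<in> S"
      using meets ab by meson
    have carr: "p \<in> carrier R" "q \<in> carrier R"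
      using pr(1) qt(1) ideal.Icarr[OF P] by auto
    have "(p \<oplus> r \<otimes> a) \<otimes> (q \<oplus> t \<otimes> b)
        = p \<otimes> (q \<oplus> t \<otimes> b) \<oplus> ((r \<otimes> a) \<otimes> q \<oplus> (r \<otimes> t) \<otimes> (a \<otimes> b))"
      using carr pr(2) qt(2) ab(1,2) by algebra
    also have "\<dots> \<in> P"
    proof -
      have "p \<otimes> (q \<oplus> t \<otimes> b) \<in> P"
        using pr qt ab carr by (intro ideal.I_r_closed[OF P]) auto
      moreover have "(r \<otimes> a) \<otimes> q \<in> P" "(r \<otimes> t) \<otimes> (a \<otimes> b) \<in> P"
        using pr qt ab by (auto intro: ideal.I_l_closed[OF P])
      ultimately show ?thesis
        using additive_subgroup.a_closed[OF ideal.axioms(1)[OF P]] by blast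
    qed
    finally show False
      using S(2)[OF pr(3) qt(3)] S(3) by blast
  qed
qed

lemma krull_dim_one_prime_below_prime_minimal:
  assumes "krull_dim_one R" "primeideal P R" "primeideal M R" "P \<subset> M"
    and "primeideal Q R" "Q \<subseteq> P"
  shows "Q = P"
proof (rule ccontr)
  assume "Q \<noteq> P"
  define chain where "chain = (\<lambda>i::nat. if i = 0 then Q else if i = 1 then P else M)"
  have "prime_chain R 2"
    unfolding prime_chain_def
  proof (intro exI[of _ chain] conjI allI impI)
    show "primeideal (chain i) R" if "i \<le> 2" for i
      using assms unfolding chain_def by auto
    show "chain i \<subset> chain (Suc i)" if "i < 2" for i
      using that assms \<open>Q \<noteq> P\<close> unfolding chain_def by (auto simp: less_Suc_eq)
  qed
  then show False
    using assms(1) unfolding krull_dim_one_def by blast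
qed

lemma (in primeideal) one_not_mem: "\<one> \<notin> I"
  using one_imp_carrier I_notcarr by blast

lemma (in primeideal) nat_pow_mem:
  assumes "x \<in> carrier R" "x [^] (k::nat) \<in> I"
  shows "x \<in> I"
  using assms(2)
proof (induct k)
  case 0
  then show ?case
    using one_not_mem by simp
next
  case (Suc k)
  then show ?case
    using I_prime[of "x [^] k" x] assms(1) by auto
qed

lemma (in noetherian_ring) ideal_family_has_maximal:
  assumes "F \<noteq> {}" "\<And>I. I \<in> F \<Longrightarrow> ideal I R"
  shows "\<exists>M\<in>F. \<forall>N\<in>F. M \<subseteq> N \<longrightarrow> N = M"
proof (rule Zorn_Lemma2, intro ballI)
  fix C assume C: "C \<in> chains F"
  show "\<exists>U\<in>F. \<forall>X\<in>C. X \<subseteq> U"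
  proof (cases "C = {}")
    case True
    then show ?thesis using assms(1) by blast
  next
    case False
    have "subset.chain {I. ideal I R} C"
      using C assms(2) unfolding chains_alt_def subset.chain_def by blast
    then have "\<Union>C \<in> C"
      using ideal_chain_is_trivial False by blast
    then show ?thesis
      using C unfolding chains_def by blast
  qed
qed

lemma (in noetherian_ring) exists_maximalideal_containing:
  assumes "ideal I R" "I \<noteq> carrier R"
  shows "\<exists>M. maximalideal M R \<and> I \<subseteq> M"
proof -
  define F where "F = {J. ideal J R \<and> I \<subseteq> J \<and> J \<noteq> carrier R}"
  obtain M where M: "M \<in> F" and max: "\<forall>N\<in>F. M \<subseteq> N \<longrightarrow> N = M"
    using ideal_family_has_maximal[of F] assms unfolding F_def by blast
  have "maximalideal M R"
  proof (rule maximalidealI)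
    show "ideal M R" "carrier R \<noteq> M"
      using M unfolding F_def by auto
    show "J = M \<or> J = carrier R" if "ideal J R" "M \<subseteq> J" "J \<subseteq> carrier R" for J
      using that M max unfolding F_def by blast
  qed
  then show ?thesis
    using M unfolding F_def by blast
qed

locale noetherian_cring = noetherian_ring + cring

context noetherian_cring
begin

lemma exists_primeideal_disjoint:
  assumes S: "\<one> \<in> S" "\<And>a b. a \<in> S \<Longrightarrow> b \<in> S \<Longrightarrow> a \<otimes> b \<in> S"
    and I: "ideal I R" "I \<inter> S = {}"
  shows "\<exists>P. primeideal P R \<and> I \<subseteq> P \<and> P \<inter> S = {}"
proof -
  define F where "F = {J. ideal J R \<and> I \<subseteq> J \<and> J \<inter> S = {}}"
  obtain P where P: "P \<in> F" and max: "\<forall>N\<in>F. P \<subseteq> N \<longrightarrow> N = P"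
    using ideal_family_has_maximal[of F] I unfolding F_def by blast
  have iP: "ideal P R" and IP: "I \<subseteq> P" and PS: "P \<inter> S = {}"
    using P unfolding F_def by simp_all
  have "\<exists>p\<in>P. \<exists>r\<in>carrier R. p \<oplus> r \<otimes> a \<in> S" if a: "a \<in> carrier R" "a \<notin> P" for a
  proof -
    have J: "ideal (P <+> PIdl a) R"
      by (rule add_ideals[OF iP cgenideal_ideal[OF a(1)]])
    have PJ: "P \<subseteq> P <+> PIdl a" and aJ: "a \<in> P <+> PIdl a"
      using ideal_subset_set_add[OF iP cgenideal_ideal[OF a(1)]] cgenideal_self[OF a(1)] by auto
    then have "P <+> PIdl a \<notin> F"
      using max a(2) by blast
    then obtain x where "x \<in> P <+> PIdl a" "x \<in> S"
      using J PJ IP unfolding F_def by blast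
    then show ?thesis
      unfolding set_add_def' cgenideal_def by blast
  qed
  then have "primeideal P R"
    using primeideal_if_sums_meet_multiplicative[OF iP S(1) S(2) PS] by blast
  then show ?thesis
    using IP PS by blast
qed

lemma exists_primeideal_avoiding_powers:
  assumes I: "ideal I R" and x: "x \<in> carrier R" and powers: "\<And>k::nat. x [^] k \<notin> I"
  shows "\<exists>P. primeideal P R \<and> I \<subseteq> P \<and> x \<notin> P"
proof -
  have "\<exists>P. primeideal P R \<and> I \<subseteq> P \<and> P \<inter> range (\<lambda>k::nat. x [^] k) = {}"
  proof (rule exists_primeideal_disjoint[OF _ _ I])
    show "\<one> \<in> range (\<lambda>k::nat. x [^] k)"
      by (metis nat_pow_0 rangeI)
    show "a \<otimes> b \<in> range (\<lambda>k::nat. x [^] k)"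
      if "a \<in> range (\<lambda>k::nat. x [^] k)" "b \<in> range (\<lambda>k::nat. x [^] k)" for a b
      using that by (auto simp: nat_pow_mult[OF x])
  qed (use powers in auto)
  moreover have "x \<in> range (\<lambda>k::nat. x [^] k)"
    using x by (auto intro: range_eqI[of _ _ 1])
  ultimately show ?thesis
    by blast
qed

lemma minimal_primeideal_power_annihilated:
  assumes P: "primeideal P R" and min: "\<And>Q. primeideal Q R \<Longrightarrow> Q \<subseteq> P \<Longrightarrow> Q = P"
    and x: "x \<in> P"
  shows "\<exists>s\<in>carrier R - P. \<exists>k::nat. s \<otimes> x [^] k = \<zero>"
proof (rule ccontr)
  assume none: "\<not> ?thesis"
  have xc: "x \<in> carrier R"
    by (rule ideal.Icarr[OF primeideal.axioms(1)[OF P] x])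
  have one: "\<one> \<in> carrier R - P"
    using primeideal.one_not_mem[OF P] by simp
  define S where "S = {s \<otimes> x [^] (k::nat) | s k. s \<in> carrier R - P}"
  have in_S: "s \<otimes> x [^] (k::nat) \<in> S" if "s \<in> carrier R - P" for s k
    using that unfolding S_def by blast
  \<comment> \<open>A prime avoiding \<open>S\<close> lies in \<open>P\<close> but misses \<open>x\<close>.\<close>
  have "\<exists>Q. primeideal Q R \<and> {\<zero>} \<subseteq> Q \<and> Q \<inter> S = {}"
  proof (rule exists_primeideal_disjoint[OF _ _ zeroideal])
    show "\<one> \<in> S"
      using in_S[OF one, of 0] by simp
    show "a \<otimes> b \<in> S" if ab: "a \<in> S" "b \<in> S" for a b
    proof -
      obtain s k where s: "s \<in> carrier R - P" and a: "a = s \<otimes> x [^] (k::nat)"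
        using ab(1) unfolding S_def by blast
      obtain t l where t: "t \<in> carrier R - P" and b: "b = t \<otimes> x [^] (l::nat)"
        using ab(2) unfolding S_def by blast
      have "s \<otimes> t \<in> carrier R - P"
        using s t primeideal.I_prime[OF P, of s t] by blast
      then have "(s \<otimes> t) \<otimes> x [^] (k + l) \<in> S"
        by (rule in_S)
      moreover have "a \<otimes> b = (s \<otimes> t) \<otimes> x [^] (k + l)"
        using s t xc unfolding a b by (simp add: nat_pow_mult[symmetric] m_ac)
      ultimately show ?thesis
        by simp
    qed
    show "{\<zero>} \<inter> S = {}"
      using none unfolding S_def by (blast dest: sym)
  qed
  then obtain Q where Q: "primeideal Q R" "Q \<inter> S = {}"
    by blast
  have "q \<in> S" if "q \<in> carrier R - P" for q
    using in_S[OF that, of 0] that by simp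
  then have "Q \<subseteq> P"
    using Q ideal.Icarr[OF primeideal.axioms(1)[OF Q(1)]] by blast
  moreover have "x \<in> S"
    using in_S[OF one, of 1] xc by simp
  ultimately show False
    using min[OF Q(1)] Q(2) x by blast
qed

lemma minimal_primeideal_annihilates_genideal_power:
  assumes P: "primeideal P R" and min: "\<And>Q. primeideal Q R \<Longrightarrow> Q \<subseteq> P \<Longrightarrow> Q = P"
    and "finite A" "A \<subseteq> P"
  shows "\<exists>s\<in>carrier R - P. \<exists>t. s \<in> annihilator (ideal_pow R (Idl A) t)"
  using \<open>finite A\<close> \<open>A \<subseteq> P\<close>
proof (induct A rule: finite_induct)
  case empty
  have "ideal_pow R (Idl {}) 1 \<subseteq> {\<zero>}"
    using ideal_prod_one[OF genideal_ideal] genideal_minimal[OF zeroideal] by simp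
  then have "\<one> \<in> annihilator (ideal_pow R (Idl {}) 1)"
    using annihilator_antimono unfolding annihilator_def by fastforce
  moreover have "\<one> \<in> carrier R - P"
    using primeideal.one_not_mem[OF P] by simp
  ultimately show ?case
    by blast
next
  case (insert a A)
  have carr: "a \<in> carrier R" "A \<subseteq> carrier R"
    using insert(4) ideal.Icarr[OF primeideal.axioms(1)[OF P]] by auto
  obtain s t where s: "s \<in> carrier R - P" "s \<in> annihilator (ideal_pow R (Idl A) t)"
    using insert by auto
  obtain s' k where s': "s' \<in> carrier R - P" "s' \<otimes> a [^] (k::nat) = \<zero>"
    using minimal_primeideal_power_annihilated[OF P min] insert(4) by blast
  have "PIdl (a [^] k) \<subseteq> carrier R"
    using carr(1) unfolding cgenideal_def by auto
  then have "s \<otimes> s' \<in> annihilator (ideal_pow R (Idl A) t <+> PIdl (a [^] k))"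
    using mult_mem_annihilator_set_add[OF ideal_pow_carrier[OF genideal_ideal[OF carr(2)]]] s(2)
      annihilator_cgenideal[of "a [^] k" s'] s' carr(1) by blast
  then have "s \<otimes> s' \<in> annihilator (ideal_pow R (Idl (insert a A)) (t + k))"
    using annihilator_antimono[OF genideal_insert_pow_subset[OF carr]] by blast
  moreover have "s \<otimes> s' \<in> carrier R - P"
    using s(1) s'(1) primeideal.I_prime[OF P] by auto
  ultimately show ?case
    by blast
qed

lemma minimal_primeideal_annihilates_power:
  assumes P: "primeideal P R" and min: "\<And>Q. primeideal Q R \<Longrightarrow> Q \<subseteq> P \<Longrightarrow> Q = P"
    and I: "ideal I R" "I \<subseteq> P"
  shows "\<exists>s\<in>carrier R - P. \<exists>t. s \<in> annihilator (ideal_pow R I t)"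
proof -
  obtain A where "A \<subseteq> carrier R" "finite A" "I = Idl A"
    using finetely_gen[OF I(1)] by blast
  moreover have "A \<subseteq> P"
    using genideal_self[OF \<open>A \<subseteq> carrier R\<close>] \<open>I = Idl A\<close> I(2) by blast
  ultimately show ?thesis
    using minimal_primeideal_annihilates_genideal_power[OF P min] by blast
qed

lemma annihilator_ideal_pow_stabilizes:
  assumes I: "ideal I R"
  shows "\<exists>u. \<forall>t. annihilator (ideal_pow R I t) \<subseteq> annihilator (ideal_pow R I u)"
proof -
  have "\<exists>X\<in>range (\<lambda>t. annihilator (ideal_pow R I t)).
      \<forall>Y\<in>range (\<lambda>t. annihilator (ideal_pow R I t)). X \<subseteq> Y \<longrightarrow> Y = X"
    using annihilator_ideal[OF ideal_pow_carrier[OF I]] by (intro ideal_family_has_maximal) auto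
  then obtain u where max: "\<forall>t. annihilator (ideal_pow R I u) \<subseteq> annihilator (ideal_pow R I t)
      \<longrightarrow> annihilator (ideal_pow R I t) = annihilator (ideal_pow R I u)"
    by auto
  define X where "X = annihilator (ideal_pow R I u)"
  have "annihilator (ideal_pow R I t) \<subseteq> X" for t
  proof (cases "t \<le> u")
    case True
    then show ?thesis
      unfolding X_def by (intro annihilator_antimono ideal_pow_antimono[OF I])
  next
    case False
    then have "X \<subseteq> annihilator (ideal_pow R I t)"
      unfolding X_def by (intro annihilator_antimono ideal_pow_antimono[OF I]) simp
    then show ?thesis
      using max unfolding X_def by blast
  qed
  then show ?thesis
    unfolding X_def by blast
qed

lemma local_ring_ideal_subset:
  assumes "local_ring R m" "ideal J R" "J \<noteq> carrier R"
  shows "J \<subseteq> m"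
  using exists_maximalideal_containing[OF assms(2,3)] assms(1) unfolding local_ring_def by blast

lemma local_ring_unit:
  assumes m: "local_ring R m" and b: "b \<in> carrier R" "b \<notin> m"
  shows "\<exists>c\<in>carrier R. \<one> = c \<otimes> b"
proof -
  have "PIdl b = carrier R"
    using local_ring_ideal_subset[OF m cgenideal_ideal[OF b(1)]] cgenideal_self[OF b(1)] b(2) by blast
  then have "\<one> \<in> PIdl b"
    by simp
  then show ?thesis
    unfolding cgenideal_def by blast
qed

lemma local_ring_primary_to:
  assumes m: "local_ring R m" and Q: "ideal Q R" "Q \<noteq> carrier R"
    and powers: "\<And>x. x \<in> m \<Longrightarrow> \<exists>k::nat. x [^] k \<in> Q"
  shows "primary_to R m Q"
proof -
  have mprime: "primeideal m R"
    using m maximalideal_prime unfolding local_ring_def by blast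
  have Qm: "Q \<subseteq> m"
    by (rule local_ring_ideal_subset[OF m Q])
  have "primary_ideal Q R"
    unfolding primary_ideal_def
  proof (intro conjI Q ballI impI)
    fix a b assume a: "a \<in> carrier R" and b: "b \<in> carrier R" and ab: "a \<otimes> b \<in> Q"
    show "a \<in> Q \<or> (\<exists>k::nat. b [^] k \<in> Q)"
    proof (cases "b \<in> m")
      case False
      then obtain c where c: "c \<in> carrier R" "\<one> = c \<otimes> b"
        using local_ring_unit[OF m b] by blast
      then have "a = c \<otimes> (a \<otimes> b)"
        using a b by (metis m_lcomm r_one)
      then show ?thesis
        using ideal.I_l_closed[OF Q(1) ab c(1)] by simp
    qed (use powers in blast)
  qed
  moreover have "ideal_radical R Q = m"
  proof
    show "ideal_radical R Q \<subseteq> m"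
      using Qm primeideal.nat_pow_mem[OF mprime] unfolding ideal_radical_def by blast
    show "m \<subseteq> ideal_radical R Q"
      using powers ideal.Icarr[OF primeideal.axioms(1)[OF mprime]] unfolding ideal_radical_def by blast
  qed
  ultimately show ?thesis
    unfolding primary_to_def by blast
qed

lemma primary_to_if_contains_annihilators:
  assumes m: "local_ring R m" and dim: "krull_dim_one R"
    and I: "ideal I R" and Q: "ideal Q R" "Q \<noteq> carrier R" "I \<subseteq> Q"
    and ann: "\<And>t. annihilator (ideal_pow R I t) \<subseteq> Q"
  shows "primary_to R m Q"
proof (rule local_ring_primary_to[OF m Q(1,2)])
  have mprime: "primeideal m R"
    using m maximalideal_prime unfolding local_ring_def by blast
  fix x assume x: "x \<in> m"
  show "\<exists>k::nat. x [^] k \<in> Q"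
  proof (rule ccontr)
    assume "\<not> (\<exists>k::nat. x [^] k \<in> Q)"
    then obtain P where P: "primeideal P R" "Q \<subseteq> P" "x \<notin> P"
      using exists_primeideal_avoiding_powers[OF Q(1)] x ideal.Icarr[OF primeideal.axioms(1)[OF mprime]]
      by blast
    have "P \<subseteq> m"
      using local_ring_ideal_subset[OF m primeideal.axioms(1)[OF P(1)]] primeideal.I_notcarr[OF P(1)]
      by metis
    then have "P \<subset> m"
      using x P(3) by blast
    then have "\<And>Q'. primeideal Q' R \<Longrightarrow> Q' \<subseteq> P \<Longrightarrow> Q' = P"
      using krull_dim_one_prime_below_prime_minimal[OF dim P(1) mprime] by blast
    then obtain s t where "s \<in> carrier R - P" "s \<in> annihilator (ideal_pow R I t)"
      using minimal_primeideal_annihilates_power[OF P(1) _ I] Q(3) P(2) by blast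
    then show False
      using ann P(2) by blast
  qed
qed

end

context cring
begin

lemma n_generated_lift:
  assumes "n_generated R n J" "J \<subseteq> I <+> K" "ideal I R" "ideal K R"
  shows "\<exists>J'. n_generated R n J' \<and> ideal J' R \<and> J' \<subseteq> I \<and> J \<subseteq> J' <+> K"
proof -
  obtain A where A: "A \<subseteq> carrier R" "finite A" "card A \<le> n" "J = Idl A"
    using assms(1) unfolding n_generated_def by blast
  have "\<forall>a\<in>A. \<exists>i\<in>I. \<exists>k\<in>K. a = i \<oplus> k"
    using genideal_self[OF A(1)] A(4) assms(2) unfolding set_add_def' by blast
  then obtain f where f: "\<forall>a\<in>A. f a \<in> I \<and> (\<exists>k\<in>K. a = f a \<oplus> k)"
    by metis
  have fA: "f ` A \<subseteq> I" "f ` A \<subseteq> carrier R"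
    using f ideal.Icarr[OF assms(3)] by auto
  have J': "ideal (Idl (f ` A)) R"
    by (rule genideal_ideal[OF fA(2)])
  have "A \<subseteq> Idl (f ` A) <+> K"
    using f genideal_self[OF fA(2)] unfolding set_add_def' by fastforce
  then have "J \<subseteq> Idl (f ` A) <+> K"
    unfolding A(4) by (rule genideal_minimal[OF add_ideals[OF J' assms(4)]])
  moreover have "n_generated R n (Idl (f ` A))"
    unfolding n_generated_def using fA(2) A(2,3) card_image_le[OF A(2), of f] by auto
  moreover have "Idl (f ` A) \<subseteq> I"
    by (rule genideal_minimal[OF assms(3) fA(1)])
  ultimately show ?thesis
    using J' by blast
qed

lemma ideal_pow_Suc_subset_modulo:
  assumes I: "ideal I R" and K: "ideal K R" and J': "ideal J' R" and J: "J \<subseteq> J' <+> K"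
    and red: "ideal_pow R (I <+> K) (Suc s) = J \<cdot> ideal_pow R (I <+> K) s"
  shows "ideal_pow R I (Suc s) \<subseteq> J' \<cdot> ideal_pow R I s <+> K"
proof -
  let ?Q = "ideal_pow R (I <+> K) s" and ?T = "J' \<cdot> ideal_pow R I s <+> K"
  have Q: "ideal ?Q R"
    by (rule ideal_pow_ideal[OF add_ideals[OF I K]])
  have T: "ideal ?T R"
    by (rule add_ideals[OF ideal_prod_is_ideal[OF J' ideal_pow_ideal[OF I]] K])
  have "J' \<cdot> ?Q \<subseteq> J' \<cdot> (ideal_pow R I s <+> K)"
    by (rule ideal_prod_mono[OF subset_refl ideal_pow_set_add_ideal_subset[OF I K]])
  also have "\<dots> \<subseteq> ?T"
    by (rule ideal_prod_set_add_subset(1)[OF J' ideal_pow_ideal[OF I] K])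
  finally have J'Q: "J' \<cdot> ?Q \<subseteq> ?T" .
  have KQ: "K \<cdot> ?Q \<subseteq> ?T"
    using ideal_prod_subset_left[OF K Q]
      ideal_subset_set_add(2)[OF ideal_prod_is_ideal[OF J' ideal_pow_ideal[OF I]] K]
    by (rule subset_trans)
  have "ideal_pow R I (Suc s) \<subseteq> ideal_pow R (I <+> K) (Suc s)"
    by (rule ideal_pow_mono[OF ideal_subset_set_add(1)[OF I K]])
  also have "\<dots> \<subseteq> (J' <+> K) \<cdot> ?Q"
    unfolding red by (rule ideal_prod_mono[OF J subset_refl])
  also have "\<dots> = J' \<cdot> ?Q <+> K \<cdot> ?Q"
    by (rule ideal_prod_distr(2)[OF Q J' K])
  also have "\<dots> \<subseteq> ?T"
    by (rule set_add_subset_ideal[OF T J'Q KQ])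
  finally show ?thesis .
qed

lemma is_reduction_descends:
  assumes I: "ideal I R" and K: "ideal K R" and ann: "K \<subseteq> annihilator (ideal_pow R I u)"
    and red: "is_reduction R J (I <+> K)"
    and J': "ideal J' R" "J' \<subseteq> I" "J \<subseteq> J' <+> K"
  shows "is_reduction R J' I"
proof -
  obtain s where s: "s > 0" "ideal_pow R (I <+> K) (Suc s) = J \<cdot> ideal_pow R (I <+> K) s"
    using red unfolding is_reduction_def by blast
  have U: "ideal (ideal_pow R I u) R" and S: "ideal (ideal_pow R I s) R"
    by (simp_all add: ideal_pow_ideal[OF I])
  have W: "ideal (J' \<cdot> ideal_pow R I (u + s)) R"
    by (rule ideal_prod_is_ideal[OF J'(1) ideal_pow_ideal[OF I]])
  have UK: "ideal_pow R I u \<cdot> K \<subseteq> J' \<cdot> ideal_pow R I (u + s)"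
    using ideal_prod_annihilator[OF ideal_pow_carrier[OF I] ann]
      additive_subgroup.zero_closed[OF ideal.axioms(1)[OF W]] by blast
  have UJ': "ideal_pow R I u \<cdot> (J' \<cdot> ideal_pow R I s) = J' \<cdot> ideal_pow R I (u + s)"
    using ideal_prod_assoc[OF U J'(1) S] ideal_prod_assoc[OF J'(1) U S] ideal_prod_commute[OF U J'(1)]
    by (simp add: ideal_pow_add[OF I])
  have "ideal_pow R I (Suc (u + s)) = ideal_pow R I u \<cdot> ideal_pow R I (Suc s)"
    using ideal_pow_add[OF I, of u "Suc s"] by simp
  also have "\<dots> \<subseteq> ideal_pow R I u \<cdot> (J' \<cdot> ideal_pow R I s <+> K)"
    by (rule ideal_prod_mono[OF subset_refl ideal_pow_Suc_subset_modulo[OF I K J'(1,3) s(2)]])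
  also have "\<dots> = J' \<cdot> ideal_pow R I (u + s) <+> ideal_pow R I u \<cdot> K"
    using ideal_prod_distr(1)[OF U ideal_prod_is_ideal[OF J'(1) S] K] UJ' by simp
  also have "\<dots> \<subseteq> J' \<cdot> ideal_pow R I (u + s)"
    by (rule set_add_subset_ideal[OF W subset_refl UK])
  finally have "ideal_pow R I (Suc (u + s)) \<subseteq> J' \<cdot> ideal_pow R I (u + s)" .
  moreover have "J' \<cdot> ideal_pow R I (u + s) \<subseteq> ideal_pow R I (Suc (u + s))"
    using ideal_prod_mono[OF J'(2) subset_refl] by simp
  ultimately show ?thesis
    unfolding is_reduction_def using J' s(1) by (intro conjI exI[of _ "u + s"]) auto
qed

end

lemma (in ring) carrier_n_generated_reduction:
  assumes "n > 0"
  shows "n_generated R n (carrier R) \<and> is_reduction R (carrier R) (carrier R)"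
  unfolding n_generated_def is_reduction_def using assms genideal_one oneideal ideal_prod_one[OF oneideal]
  by (intro conjI exI[of _ "{\<one>}"] exI[of _ "1::nat"]) auto

lemma (in noetherian_cring) n_generated_reduction_set_add_stable_annihilator:
  assumes m: "local_ring R m" and dim: "krull_dim_one R" and n: "n > 0"
    and hyp: "\<forall>Q. primary_to R m Q \<longrightarrow> (\<exists>J. n_generated R n J \<and> is_reduction R J Q)"
    and I: "ideal I R" and u: "\<And>t. annihilator (ideal_pow R I t) \<subseteq> annihilator (ideal_pow R I u)"
  shows "\<exists>J. n_generated R n J \<and> is_reduction R J (I <+> annihilator (ideal_pow R I u))"
proof -
  let ?K = "annihilator (ideal_pow R I u)"
  have K: "ideal ?K R"
    by (rule annihilator_ideal[OF ideal_pow_carrier[OF I]])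
  show ?thesis
  proof (cases "I <+> ?K = carrier R")
    case True
    then show ?thesis
      using carrier_n_generated_reduction[OF n] by auto
  next
    case False
    have "annihilator (ideal_pow R I t) \<subseteq> I <+> ?K" for t
      using u[of t] ideal_subset_set_add(2)[OF I K] by blast
    then have "primary_to R m (I <+> ?K)"
      by (rule primary_to_if_contains_annihilators[OF m dim I add_ideals[OF I K] False
            ideal_subset_set_add(1)[OF I K]])
    then show ?thesis
      using hyp by blast
  qed
qed

theorem proposition2p2:
  fixes R :: "('a, 'b) ring_scheme" and m :: "'a set" and n :: nat
  assumes "noetherian_ring R"
    and "local_ring R m"
    and "krull_dim_one R"
    and "n > 0"
    and "\<forall>Q. primary_to R m Q \<longrightarrow> (\<exists>J. n_generated R n J \<and> is_reduction R J Q)"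
  shows "\<forall>I. ideal I R \<longrightarrow> (\<exists>J. n_generated R n J \<and> is_reduction R J I)"
proof (intro allI impI)
  fix I assume I: "ideal I R"
  interpret noetherian_cring R
    using assms(1,2) unfolding local_ring_def noetherian_cring_def by blast
  obtain u where u: "\<And>t. annihilator (ideal_pow R I t) \<subseteq> annihilator (ideal_pow R I u)"
    using annihilator_ideal_pow_stabilizes[OF I] by blast
  define K where "K = annihilator (ideal_pow R I u)"
  have K: "ideal K R"
    unfolding K_def by (rule annihilator_ideal[OF ideal_pow_carrier[OF I]])
  obtain J where J: "n_generated R n J" "is_reduction R J (I <+>\<^bsub>R\<^esub> K)"
    using n_generated_reduction_set_add_stable_annihilator[OF assms(2-5) I u] unfolding K_def by blast
  then obtain J' where "n_generated R n J'" "ideal J' R" "J' \<subseteq> I" "J \<subseteq> J' <+>\<^bsub>R\<^esub> K"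
    using n_generated_lift[OF J(1) _ I K] unfolding is_reduction_def by blast
  then show "\<exists>J. n_generated R n J \<and> is_reduction R J I"
    using is_reduction_descends[OF I K _ J(2)] unfolding K_def by blast
qed

end
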